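(* Let $f:\mathbb{R}\to\mathbb{R}$ be a $2\pi$-periodic $\mathcal{C}^{1}$ function with $\int_{0}^{2\pi}f(t)\,dt=0$ and such that $\int_{0}^{2\pi}f^{2}(t)\,dt=\int_{0}^{2\pi}f'^{2}(t)\,dt$. For each odd integer $n\geq 5$, let $X_{n}\in\mathbb{R}^{n}$ be the vector with components $x_{j,n}=f(\frac{2\pi}{n}j)$, $j=1,\dots,n$, and for $k=1,\dots,(n-1)/2$ let $P_{k}$ denote the orthogonal projection of $\mathbb{R}^{n}$ (with the standard inner product) onto the subspace $H_{k}$ spanned by the vectors $$e_{2k}=\sqrt{\tfrac{2}{n}}\left(1,\cos(\tfrac{2\pi}{n}k),\cos(\tfrac{2\pi}{n}2k),\dots,\cos(\tfrac{2\pi}{n}(n-1)k)\right),$$ $$e_{2k+1}=\sqrt{\tfrac{2}{n}}\left(0,\sin(\tfrac{2\pi}{n}k),\sin(\tfrac{2\pi}{n}2k),\dots,\sin(\tfrac{2\pi}{n}(n-1)k)\right).$$ Then, as $n\to\infty$ through odd integers, $$\lim_{n\to\infty}\frac{1}{n}\sum_{k=2}^{(n-1)/2}\|P_{k}(X_{n})\|^{2}= 0.$$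
   Context: Here $\|\cdot\|$ is the Euclidean norm on $\mathbb{R}^n$. The vectors $e_{2k},e_{2k+1}$ ($k=1,\dots,(n-1)/2$), together with $e_1=\frac{1}{\sqrt n}(1,\dots,1)$, form an orthonormal basis of $\mathbb{R}^n$ for odd $n$. *)

theory Defs
  imports "HOL-Analysis.Analysis"
begin

text \<open>Vectors of R^n are represented as functions nat => real, where only the
  components with index i < n matter; index i corresponds to the paper's (i+1)-th
  component.\<close>

definition vinner :: "nat \<Rightarrow> (nat \<Rightarrow> real) \<Rightarrow> (nat \<Rightarrow> real) \<Rightarrow> real" where
  "vinner n x y = (\<Sum>i<n. x i * y i)"

definition vnorm :: "nat \<Rightarrow> (nat \<Rightarrow> real) \<Rightarrow> real" where
  "vnorm n x = sqrt (vinner n x x)"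

definition span2 :: "nat \<Rightarrow> (nat \<Rightarrow> real) \<Rightarrow> (nat \<Rightarrow> real) \<Rightarrow> (nat \<Rightarrow> real) set" where
  "span2 n u v = {(\<lambda>i. if i < n then a * u i + b * v i else 0) | a b. True}"

definition orth_proj2 :: "nat \<Rightarrow> (nat \<Rightarrow> real) \<Rightarrow> (nat \<Rightarrow> real) \<Rightarrow> (nat \<Rightarrow> real) \<Rightarrow> (nat \<Rightarrow> real)" where
  "orth_proj2 n u v x = (THE p. p \<in> span2 n u v \<and>
      (\<forall>w\<in>span2 n u v. vinner n (\<lambda>i. x i - p i) w = 0))"

text \<open>Basis vectors e_{2k}, e_{2k+1} (0-based index i = paper's component i+1).\<close>
definition ecos :: "nat \<Rightarrow> nat \<Rightarrow> nat \<Rightarrow> real" where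
  "ecos n k i = sqrt (2 / real n) * cos (2 * pi / real n * real i * real k)"

definition esin :: "nat \<Rightarrow> nat \<Rightarrow> nat \<Rightarrow> real" where
  "esin n k i = sqrt (2 / real n) * sin (2 * pi / real n * real i * real k)"

definition sampleX :: "(real \<Rightarrow> real) \<Rightarrow> nat \<Rightarrow> nat \<Rightarrow> real" where
  "sampleX f n i = f (2 * pi / real n * real (i + 1))"

end

theory Submission
  imports Defs
begin

(* Equality in Wirtinger's inequality forces f to be a pure first harmonic A sin (t - t0).
   Pick t0 with f t0 = f (t0 + pi) and put c = f t0: then g = f - c vanishes at t0, t0 + pi and
   t0 + 2 pi, so on each half period the Dirichlet form of Wirtinger's inequality applies; it comes
   from the identity g'^2 - g^2 = (g' - g cot)^2 + (g^2 cot)'.  Mean zero and equality make the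
   total defect of g equal to -2 pi c^2, hence c = 0 and both halves are extremal, i.e. multiples
   of a sine, which are glued by matching derivatives at t0 + pi.  The samples of a first harmonic
   are orthogonal to all e_2k, e_(2k+1) with k >= 2, so every projection in the sum vanishes. *)

section \<open>Wirtinger's inequality with Dirichlet boundary conditions\<close>

lemma sin_ge_half_self:
  fixes x :: real
  assumes "0 \<le> x" "x \<le> pi / 3"
  shows "x / 2 \<le> sin x"
proof (cases "x = 0")
  case False
  with assms have "0 < x" by simp
  then obtain z where z: "0 < z" "z < x"
    and mvt: "sin x - x / 2 - (sin 0 - 0 / 2) = (x - 0) * (cos z - 1 / 2)"
    using MVT2[of 0 x "\<lambda>t. sin t - t / 2" "\<lambda>t. cos t - 1 / 2"]
    by (force intro!: derivative_eq_intros)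
  have "cos (pi / 3) \<le> cos z"
    using z assms by (intro cos_monotone_0_pi_le) auto
  then have "0 \<le> x * (cos z - 1 / 2)"
    using \<open>0 < x\<close> by (simp add: cos_60)
  with mvt show ?thesis by simp
qed simp

lemma nonpos_if_le_linear_near_0:
  fixes a K \<delta> :: real
  assumes "0 < \<delta>" "\<And>e. 0 < e \<Longrightarrow> e \<le> \<delta> \<Longrightarrow> a \<le> K * e"
  shows "a \<le> 0"
proof (rule tendsto_lowerbound)
  show "((\<lambda>e. K * e) \<longlongrightarrow> 0) (at_right 0)"
    by (auto intro!: tendsto_eq_intros)
  show "\<forall>\<^sub>F e in at_right 0. a \<le> K * e"
    unfolding eventually_at_right_field using assms by (intro exI[of _ \<delta>]) auto
qed simp

lemma wirtinger_cot_has_derivative: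
  fixes g :: "real \<Rightarrow> real"
  assumes "(g has_real_derivative g') (at t)" "sin t \<noteq> 0"
  shows "((\<lambda>s. (g s)\<^sup>2 * cot s) has_real_derivative
           (g'\<^sup>2 - (g t)\<^sup>2) - (g' - g t * cot t)\<^sup>2) (at t)"
proof -
  have "inverse ((sin t)\<^sup>2) = 1 + (cot t)\<^sup>2"
    using assms(2) sin_cos_squared_add[of t] by (simp add: cot_def field_simps)
  then have "2 * g t * g' * cot t + (g t)\<^sup>2 * - inverse ((sin t)\<^sup>2) =
      (g'\<^sup>2 - (g t)\<^sup>2) - (g' - g t * cot t)\<^sup>2"
    by (simp add: power2_eq_square algebra_simps)
  moreover have "((\<lambda>s. (g s)\<^sup>2 * cot s) has_real_derivative
      2 * g t * g' * cot t + (g t)\<^sup>2 * - inverse ((sin t)\<^sup>2)) (at t)"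
    using assms by (auto intro!: derivative_eq_intros DERIV_cot)
  ultimately show ?thesis
    by simp
qed

lemma continuous_on_wirtinger_cot_defect:
  fixes g g' :: "real \<Rightarrow> real"
  assumes deriv: "\<And>x. (g has_real_derivative g' x) (at x)"
    and cont_deriv: "continuous_on UNIV g'"
    and "0 < a" "b < pi"
  shows "continuous_on {a..b} (\<lambda>t. (g' t - g t * cot t)\<^sup>2)"
proof -
  have "continuous_on {a..b} g"
    using deriv by (meson DERIV_isCont continuous_at_imp_continuous_on)
  moreover have "continuous_on {a..b} g'"
    using cont_deriv continuous_on_subset by blast
  moreover have "sin t \<noteq> 0" if "t \<in> {a..b}" for t
    using that assms sin_gt_zero[of t] by force
  ultimately show ?thesis
    by (intro continuous_intros) auto
qed

lemma integral_wirtinger_cot_identity: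
  fixes g g' :: "real \<Rightarrow> real"
  assumes deriv: "\<And>x. (g has_real_derivative g' x) (at x)"
    and cont_deriv: "continuous_on UNIV g'"
    and ab: "0 < a" "a \<le> b" "b < pi"
  shows "integral {a..b} (\<lambda>t. (g' t)\<^sup>2 - (g t)\<^sup>2) =
    integral {a..b} (\<lambda>t. (g' t - g t * cot t)\<^sup>2) + ((g b)\<^sup>2 * cot b - (g a)\<^sup>2 * cot a)"
proof -
  have sin_nonzero: "sin t \<noteq> 0" if "t \<in> {a..b}" for t
    using that ab sin_gt_zero[of t] by force
  have R: "((\<lambda>t. (g' t - g t * cot t)\<^sup>2) has_integral
      integral {a..b} (\<lambda>t. (g' t - g t * cot t)\<^sup>2)) {a..b}"
    using continuous_on_wirtinger_cot_defect[OF deriv cont_deriv ab(1,3)]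
    by (intro integrable_integral integrable_continuous_interval)
  have "((\<lambda>t. ((g' t)\<^sup>2 - (g t)\<^sup>2) - (g' t - g t * cot t)\<^sup>2) has_integral
      (g b)\<^sup>2 * cot b - (g a)\<^sup>2 * cot a) {a..b}"
  proof (rule fundamental_theorem_of_calculus)
    fix t
    assume "t \<in> {a..b}"
    then have "sin t \<noteq> 0"
      by (rule sin_nonzero)
    from wirtinger_cot_has_derivative[OF deriv this]
    show "((\<lambda>s. (g s)\<^sup>2 * cot s) has_vector_derivative
        ((g' t)\<^sup>2 - (g t)\<^sup>2) - (g' t - g t * cot t)\<^sup>2) (at t within {a..b})"
      unfolding has_real_derivative_iff_has_vector_derivative[symmetric]
      by (rule has_field_derivative_at_within)
  qed (use ab in simp)
  from has_integral_add[OF R this] show ?thesis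
    by (simp add: integral_unique)
qed

lemma sq_mul_cot_le:
  fixes y B e :: real
  assumes "0 < e" "e \<le> pi / 3" "\<bar>y\<bar> \<le> B * e"
  shows "\<bar>y\<^sup>2 * cot e\<bar> \<le> 2 * B\<^sup>2 * e"
proof -
  have sin_e: "e / 2 \<le> sin e"
    using assms by (intro sin_ge_half_self) auto
  with assms have "0 < sin e" by simp
  have "\<bar>y\<^sup>2 * cot e\<bar> = y\<^sup>2 * \<bar>cos e\<bar> / sin e"
    using \<open>0 < sin e\<close> by (simp add: cot_def abs_mult)
  also have "\<dots> \<le> (B * e)\<^sup>2 * 1 / (e / 2)"
    using assms sin_e \<open>0 < sin e\<close> abs_le_square_iff[of y "B * e"]
    by (intro frac_le mult_mono) auto
  also have "\<dots> = 2 * B\<^sup>2 * e"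
    using assms by (simp add: field_simps power2_eq_square)
  finally show ?thesis .
qed

(* The cot-singularities force us onto [e, pi - e]; since g vanishes at 0 and pi it is
   Lipschitz-small there, so the boundary terms g^2 cot of the identity above are O(e). *)
lemma dirichlet_wirtinger_defect_le:
  fixes g g' :: "real \<Rightarrow> real"
  assumes deriv: "\<And>x. (g has_real_derivative g' x) (at x)"
    and cont_deriv: "continuous_on UNIV g'"
    and g0: "g 0 = 0" and gpi: "g pi = 0"
    and bound: "\<And>t. t \<in> {0..pi} \<Longrightarrow> \<bar>g t\<bar> + \<bar>g' t\<bar> \<le> B"
    and e: "0 < e" "e \<le> pi / 3"
  shows "integral {e..pi - e} (\<lambda>t. (g' t - g t * cot t)\<^sup>2) \<le>
    integral {0..pi} (\<lambda>t. (g' t)\<^sup>2 - (g t)\<^sup>2) + 6 * B\<^sup>2 * e"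
proof -
  define F where "F t = (g' t)\<^sup>2 - (g t)\<^sup>2" for t
  have cont_g: "continuous_on S g" for S
    using deriv by (meson DERIV_isCont continuous_at_imp_continuous_on)
  have cont_F: "continuous_on S F" for S
    unfolding F_def by (intro continuous_intros cont_g continuous_on_subset[OF cont_deriv subset_UNIV])
  have F_bound: "norm (F t) \<le> B\<^sup>2" if "t \<in> {0..pi}" for t
  proof -
    have "(g t)\<^sup>2 \<le> B\<^sup>2" "(g' t)\<^sup>2 \<le> B\<^sup>2"
      using bound[OF that] abs_le_square_iff[of "g t" B] abs_le_square_iff[of "g' t" B] by auto
    then show ?thesis
      unfolding F_def real_norm_def abs_le_iff
      using zero_le_power2[of "g t"] zero_le_power2[of "g' t"] by linarith
  qed
  have lipschitz: "\<bar>g s - g t\<bar> \<le> B * \<bar>s - t\<bar>" if "s \<in> {0..pi}" "t \<in> {0..pi}" for s t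
    using field_differentiable_bound[of "{0..pi}" g g' B s t] that bound
      has_field_derivative_at_within[OF deriv]
    by force
  have "integral {0..pi} F = integral {0..e} F + integral {e..pi - e} F + integral {pi - e..pi} F"
    using e integrable_continuous_interval[OF cont_F]
    by (simp add: Henstock_Kurzweil_Integration.integral_combine)
  moreover have "norm (integral {0..e} F) \<le> B\<^sup>2 * (e - 0)"
    using e F_bound by (intro integral_bound cont_F) auto
  moreover have "norm (integral {pi - e..pi} F) \<le> B\<^sup>2 * (pi - (pi - e))"
    using e F_bound by (intro integral_bound cont_F) auto
  moreover have "integral {e..pi - e} F = integral {e..pi - e} (\<lambda>t. (g' t - g t * cot t)\<^sup>2) +
      ((g (pi - e))\<^sup>2 * cot (pi - e) - (g e)\<^sup>2 * cot e)"
    unfolding F_def using e by (intro integral_wirtinger_cot_identity deriv cont_deriv) auto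
  moreover have "\<bar>(g e)\<^sup>2 * cot e\<bar> \<le> 2 * B\<^sup>2 * e"
    using e lipschitz[of e 0] g0 by (intro sq_mul_cot_le) auto
  moreover have "\<bar>(g (pi - e))\<^sup>2 * cot (pi - e)\<bar> \<le> 2 * B\<^sup>2 * e"
    using e lipschitz[of "pi - e" pi] gpi sq_mul_cot_le[of e "g (pi - e)" B]
    by (simp add: cot_def)
  ultimately show ?thesis
    unfolding F_def by (simp add: abs_le_iff)
qed

lemma dirichlet_wirtinger_defect_bound:
  fixes g g' :: "real \<Rightarrow> real"
  assumes deriv: "\<And>x. (g has_real_derivative g' x) (at x)"
    and cont_deriv: "continuous_on UNIV g'"
    and "g 0 = 0" "g pi = 0"
  obtains K where "\<And>e. 0 < e \<Longrightarrow> e \<le> pi / 3 \<Longrightarrow>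
    integral {e..pi - e} (\<lambda>t. (g' t - g t * cot t)\<^sup>2) \<le> integral {0..pi} (\<lambda>t. (g' t)\<^sup>2 - (g t)\<^sup>2) + K * e"
proof -
  have "continuous_on {0..pi} g"
    using deriv by (meson DERIV_isCont continuous_at_imp_continuous_on)
  then have "bounded ((\<lambda>t. \<bar>g t\<bar> + \<bar>g' t\<bar>) ` {0..pi})"
    by (intro compact_imp_bounded compact_continuous_image continuous_intros
        continuous_on_subset[OF cont_deriv subset_UNIV]) auto
  then obtain B where "\<And>t. t \<in> {0..pi} \<Longrightarrow> \<bar>g t\<bar> + \<bar>g' t\<bar> \<le> B"
    unfolding bounded_real by (metis abs_le_D1 image_eqI)
  with dirichlet_wirtinger_defect_le[OF assms] that show thesis
    by blast
qed

lemma dirichlet_wirtinger_nonneg: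
  fixes g g' :: "real \<Rightarrow> real"
  assumes deriv: "\<And>x. (g has_real_derivative g' x) (at x)"
    and cont_deriv: "continuous_on UNIV g'"
    and "g 0 = 0" "g pi = 0"
  shows "0 \<le> integral {0..pi} (\<lambda>t. (g' t)\<^sup>2 - (g t)\<^sup>2)"
proof -
  obtain K where K: "\<And>e. 0 < e \<Longrightarrow> e \<le> pi / 3 \<Longrightarrow>
    integral {e..pi - e} (\<lambda>t. (g' t - g t * cot t)\<^sup>2) \<le> integral {0..pi} (\<lambda>t. (g' t)\<^sup>2 - (g t)\<^sup>2) + K * e"
    using dirichlet_wirtinger_defect_bound[OF assms] by blast
  have "- integral {0..pi} (\<lambda>t. (g' t)\<^sup>2 - (g t)\<^sup>2) \<le> K * e" if e: "0 < e" "e \<le> pi / 3" for e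
  proof -
    have "0 \<le> integral {e..pi - e} (\<lambda>t. (g' t - g t * cot t)\<^sup>2)"
      using e continuous_on_wirtinger_cot_defect[OF deriv cont_deriv, of e "pi - e"]
      by (intro integral_nonneg integrable_continuous_interval) auto
    with K[OF e] show ?thesis by linarith
  qed
  then have "- integral {0..pi} (\<lambda>t. (g' t)\<^sup>2 - (g t)\<^sup>2) \<le> 0"
    by (intro nonpos_if_le_linear_near_0[of "pi / 3"]) auto
  then show ?thesis
    by simp
qed

lemma dirichlet_wirtinger_eq_0_imp_cot_ode:
  fixes g g' :: "real \<Rightarrow> real"
  assumes deriv: "\<And>x. (g has_real_derivative g' x) (at x)"
    and cont_deriv: "continuous_on UNIV g'"
    and g0: "g 0 = 0" and gpi: "g pi = 0"
    and eq_0: "integral {0..pi} (\<lambda>t. (g' t)\<^sup>2 - (g t)\<^sup>2) = 0"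
    and t: "0 < t" "t < pi"
  shows "g' t = g t * cot t"
proof -
  define R where "R t = (g' t - g t * cot t)\<^sup>2" for t
  obtain K where K: "\<And>e. 0 < e \<Longrightarrow> e \<le> pi / 3 \<Longrightarrow> integral {e..pi - e} R \<le> K * e"
    using dirichlet_wirtinger_defect_bound[OF deriv cont_deriv g0 gpi] eq_0 unfolding R_def by auto
  have cont_R: "continuous_on {a..b} R" if "0 < a" "b < pi" for a b
    unfolding R_def using that by (rule continuous_on_wirtinger_cot_defect[OF deriv cont_deriv])
  have R_nonneg: "0 \<le> R t" for t
    unfolding R_def by simp
  define e where "e = min (pi / 3) (min t (pi - t))"
  have e: "0 < e" "e \<le> pi / 3" "t \<in> {e..pi - e}"
    unfolding e_def using t pi_gt_zero by (auto simp: min_def)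
  have "integral {e..pi - e} R \<le> 0"
  proof (rule nonpos_if_le_linear_near_0)
    fix d
    assume d: "0 < d" "d \<le> e"
    have "integral {e..pi - e} R \<le> integral {d..pi - d} R"
      using d e R_nonneg integrable_continuous_interval[OF cont_R]
      by (intro integral_subset_le) auto
    also have "\<dots> \<le> K * d"
      using d e by (intro K) auto
    finally show "integral {e..pi - e} R \<le> K * d" .
  qed (fact e)
  moreover have "0 \<le> integral {e..pi - e} R"
    using e R_nonneg integrable_continuous_interval[OF cont_R] by (intro integral_nonneg) auto
  ultimately have "integral {e..pi - e} R = 0"
    by simp
  then have "\<forall>x\<in>{e..pi - e}. R x = 0"
    using e R_nonneg cont_R[of e "pi - e"] integral_eq_0_iff[of e "pi - e" R] by auto
  with e show ?thesis
    unfolding R_def by simp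
qed

lemma cot_ode_imp_sin_multiple:
  fixes g g' :: "real \<Rightarrow> real"
  assumes deriv: "\<And>x. (g has_real_derivative g' x) (at x)"
    and ode: "\<And>t. 0 < t \<Longrightarrow> t < pi \<Longrightarrow> g' t = g t * cot t"
    and g0: "g 0 = 0" and gpi: "g pi = 0"
    and t: "t \<in> {0..pi}"
  shows "g t = g (pi / 2) * sin t"
proof -
  have "DERIV (\<lambda>t. g t / sin t) s :> 0" if "s \<in> {0<..<pi}" for s
  proof -
    have "sin s > 0"
      using that by (intro sin_gt_zero) auto
    then have "DERIV (\<lambda>t. g t / sin t) s :> (g' s * sin s - g s * cos s) / (sin s * sin s)"
      by (auto intro!: derivative_eq_intros deriv)
    with \<open>sin s > 0\<close> that ode[of s] show ?thesis
      by (simp add: cot_def)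
  qed
  then have const: "g s / sin s = g (pi / 2) / sin (pi / 2)" if "s \<in> {0<..<pi}" for s
    using that by (intro DERIV_isconst3[of 0 pi]) auto
  from t consider "t = 0" | "t = pi" | "t \<in> {0<..<pi}"
    by fastforce
  then show ?thesis
  proof cases
    case 3
    then have "sin t > 0"
      by (simp add: sin_gt_zero)
    with const[OF 3] show ?thesis
      by (simp add: divide_eq_eq)
  qed (use g0 gpi in auto)
qed

lemma
  fixes g g' :: "real \<Rightarrow> real"
  assumes deriv: "\<And>x. (g has_real_derivative g' x) (at x)"
    and cont_deriv: "continuous_on UNIV g'"
    and ga: "g a = 0" and gb: "g (a + pi) = 0"
  shows dirichlet_wirtinger_nonneg_interval: "0 \<le> integral {a..a + pi} (\<lambda>t. (g' t)\<^sup>2 - (g t)\<^sup>2)"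
    and dirichlet_wirtinger_eq_0_imp_sin_interval:
      "integral {a..a + pi} (\<lambda>t. (g' t)\<^sup>2 - (g t)\<^sup>2) = 0 \<Longrightarrow> \<exists>A. \<forall>t\<in>{a..a + pi}. g t = A * sin (t - a)"
proof -
  have deriv': "((\<lambda>t. g (t + a)) has_real_derivative g' (t + a)) (at t)" for t
    using DERIV_shift deriv by blast
  have cont_deriv': "continuous_on UNIV (\<lambda>t. g' (t + a))"
    by (intro continuous_on_compose2[OF cont_deriv] continuous_intros) auto
  have zeros: "g (0 + a) = 0" "g (pi + a) = 0"
    using ga gb by (simp_all add: add.commute)
  have shift: "integral {0..pi} (\<lambda>t. (g' (t + a))\<^sup>2 - (g (t + a))\<^sup>2) =
      integral {a..a + pi} (\<lambda>t. (g' t)\<^sup>2 - (g t)\<^sup>2)"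
    using integral_shift_real_ivl[where a=a and b="a + pi" and c=a and f="\<lambda>t. (g' t)\<^sup>2 - (g t)\<^sup>2"]
    by simp
  show "0 \<le> integral {a..a + pi} (\<lambda>t. (g' t)\<^sup>2 - (g t)\<^sup>2)"
    using dirichlet_wirtinger_nonneg[OF deriv' cont_deriv' zeros] shift by simp
  assume "integral {a..a + pi} (\<lambda>t. (g' t)\<^sup>2 - (g t)\<^sup>2) = 0"
  with shift have eq_0: "integral {0..pi} (\<lambda>t. (g' (t + a))\<^sup>2 - (g (t + a))\<^sup>2) = 0"
    by simp
  have ode: "g' (t + a) = g (t + a) * cot t" if "0 < t" "t < pi" for t
    using dirichlet_wirtinger_eq_0_imp_cot_ode[OF deriv' cont_deriv' zeros eq_0 that] .
  have "g t = g (pi / 2 + a) * sin (t - a)" if "t \<in> {a..a + pi}" for t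
    using cot_ode_imp_sin_multiple[OF deriv' ode zeros, of "t - a"] that by simp
  then show "\<exists>A. \<forall>t\<in>{a..a + pi}. g t = A * sin (t - a)"
    by blast
qed

section \<open>The equality case for periodic functions\<close>

lemma periodic_derivative:
  fixes f f' :: "real \<Rightarrow> real"
  assumes deriv: "\<And>x. (f has_real_derivative f' x) (at x)"
    and periodic: "\<And>x. f (x + T) = f x"
  shows "f' (x + T) = f' x"
proof -
  have "((\<lambda>x. f (x + T)) has_real_derivative f' (x + T)) (at x)"
    using DERIV_shift deriv by blast
  with periodic deriv[of x] show ?thesis
    using DERIV_unique by fastforce
qed

lemma periodic_eq_if_eq_on_period:
  fixes f g :: "real \<Rightarrow> 'a"
  assumes "\<And>x. f (x + T) = f x" "\<And>x. g (x + T) = g x" "0 < T"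
    and eq: "\<And>t. t \<in> {a..a + T} \<Longrightarrow> f t = g t"
  shows "f x = g x"
proof -
  interpret f: periodic_fun_simple f T
    by standard (rule assms(1))
  interpret g: periodic_fun_simple g T
    by standard (rule assms(2))
  define k where "k = \<lfloor>(x - a) / T\<rfloor>"
  have "of_int k * T \<le> x - a" "x - a < of_int k * T + T"
    using assms(3) floor_divide_lower[of T "x - a"] floor_divide_upper[of T "x - a"]
    unfolding k_def by (simp_all add: algebra_simps)
  then have "f (x - of_int k * T) = g (x - of_int k * T)"
    by (intro eq) auto
  then show ?thesis
    using f.plus_of_int[of "x - of_int k * T" k] g.plus_of_int[of "x - of_int k * T" k] by simp
qed

lemma exists_eq_at_half_period_shift:
  fixes f :: "real \<Rightarrow> real"
  assumes cont: "continuous_on UNIV f" and periodic: "\<And>x. f (x + 2 * p) = f x" and "0 \<le> p"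
  obtains t0 where "0 \<le> t0" "t0 \<le> p" "f t0 = f (t0 + p)"
proof -
  define h where "h t = f t - f (t + p)" for t
  have "continuous_on UNIV h"
    unfolding h_def using cont
    by (intro continuous_intros continuous_on_compose2[OF cont]) auto
  then have cont_h: "isCont h x" for x
    by (simp add: continuous_on_eq_continuous_at)
  have "h p = - h 0"
    unfolding h_def using periodic[of 0] by simp
  then have "\<exists>t. 0 \<le> t \<and> t \<le> p \<and> h t = 0"
    using IVT[of h 0 0 p] IVT2[of h p 0 0] cont_h \<open>0 \<le> p\<close> by (cases "h 0 \<le> 0") auto
  with that show thesis
    unfolding h_def by auto
qed

lemma integral_periodic_translate:
  fixes F :: "real \<Rightarrow> real"
  assumes cont: "continuous_on UNIV F" and periodic: "\<And>x. F (x + T) = F x"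
    and "0 \<le> a" "a \<le> T"
  shows "integral {a..a + T} F = integral {0..T} F"
proof -
  have int: "F integrable_on {c..d}" for c d
    using cont continuous_on_subset integrable_continuous_interval by blast
  have "integral {T..a + T} F = integral {T - T..a + T - T} (\<lambda>x. F (x + T))"
    by (rule integral_shift_real_ivl[symmetric])
  also have "\<dots> = integral {0..a} F"
    using periodic by simp
  finally have "integral {a..a + T} F = integral {a..T} F + integral {0..a} F"
    using assms int Henstock_Kurzweil_Integration.integral_combine[of a T "a + T" F] by simp
  also have "\<dots> = integral {0..T} F"
    using assms int Henstock_Kurzweil_Integration.integral_combine[of 0 a T F] by simp
  finally show ?thesis .
qed

lemma continuous_derivatives_eq_on_interval:
  fixes f g f' g' :: "real \<Rightarrow> real"
  assumes deriv_f: "\<And>x. (f has_real_derivative f' x) (at x)"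
    and deriv_g: "\<And>x. (g has_real_derivative g' x) (at x)"
    and "continuous_on UNIV f'" "continuous_on UNIV g'"
    and "a < b" and eq: "\<And>t. t \<in> {a..b} \<Longrightarrow> f t = g t"
    and "t \<in> {a..b}"
  shows "f' t = g' t"
proof -
  have "{a<..<b} \<subseteq> {x. f' x = g' x}"
  proof
    fix x
    assume x: "x \<in> {a<..<b}"
    have "(g has_real_derivative f' x) (at x)"
      using x eq by (intro has_field_derivative_transform_within_open[OF deriv_f, of "{a<..<b}"]) auto
    with deriv_g show "x \<in> {x. f' x = g' x}"
      using DERIV_unique by blast
  qed
  moreover have "closed {x. f' x = g' x}"
    using assms(3,4) by (rule closed_Collect_eq)
  ultimately have "closure {a<..<b} \<subseteq> {x. f' x = g' x}"
    by (rule closure_minimal)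
  with assms(5,7) show ?thesis
    by auto
qed

lemma integral_wirtinger_defect_offset:
  fixes f f' :: "real \<Rightarrow> real"
  assumes "continuous_on UNIV f" "continuous_on UNIV f'"
    and mean_zero: "integral {0..2 * pi} f = 0"
    and wirtinger_eq: "integral {0..2 * pi} (\<lambda>t. (f t)\<^sup>2) = integral {0..2 * pi} (\<lambda>t. (f' t)\<^sup>2)"
  shows "integral {0..2 * pi} (\<lambda>t. (f' t)\<^sup>2 - (f t - c)\<^sup>2) = - 2 * pi * c\<^sup>2"
proof -
  have cont: "continuous_on {0..2 * pi} f" "continuous_on {0..2 * pi} f'"
    using assms(1,2) continuous_on_subset by blast+
  have f'_sq: "((\<lambda>t. (f' t)\<^sup>2) has_integral integral {0..2 * pi} (\<lambda>t. (f' t)\<^sup>2)) {0..2 * pi}"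
    and f_sq: "((\<lambda>t. (f t)\<^sup>2) has_integral integral {0..2 * pi} (\<lambda>t. (f t)\<^sup>2)) {0..2 * pi}"
    by (intro integrable_integral integrable_continuous_interval continuous_intros cont)+
  have const: "((\<lambda>t. c\<^sup>2) has_integral 2 * pi * c\<^sup>2) {0..2 * pi}"
    using has_integral_const_real[of "c\<^sup>2" 0 "2 * pi"] by simp
  have f: "(f has_integral 0) {0..2 * pi}"
    using mean_zero integrable_integral[OF integrable_continuous_interval[OF cont(1)]] by simp
  have "((\<lambda>t. ((f' t)\<^sup>2 - (f t)\<^sup>2) + 2 * c * f t - c\<^sup>2) has_integral
      (integral {0..2 * pi} (\<lambda>t. (f' t)\<^sup>2) - integral {0..2 * pi} (\<lambda>t. (f t)\<^sup>2)) + 2 * c * 0 - 2 * pi * c\<^sup>2)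
      {0..2 * pi}"
    by (intro has_integral_diff has_integral_add has_integral_mult_right f'_sq f_sq f const)
  moreover have "(\<lambda>t. ((f' t)\<^sup>2 - (f t)\<^sup>2) + 2 * c * f t - c\<^sup>2) = (\<lambda>t. (f' t)\<^sup>2 - (f t - c)\<^sup>2)"
    by (auto simp: power2_eq_square algebra_simps)
  ultimately have "((\<lambda>t. (f' t)\<^sup>2 - (f t - c)\<^sup>2) has_integral - 2 * pi * c\<^sup>2) {0..2 * pi}"
    using wirtinger_eq by simp
  then show ?thesis
    by (rule integral_unique)
qed

lemma periodic_wirtinger_eq_half_periods:
  fixes f f' :: "real \<Rightarrow> real"
  assumes deriv: "\<And>x. (f has_real_derivative f' x) (at x)"
    and cont_deriv: "continuous_on UNIV f'"
    and periodic: "\<And>x. f (x + 2 * pi) = f x"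
    and mean_zero: "integral {0..2 * pi} f = 0"
    and wirtinger_eq: "integral {0..2 * pi} (\<lambda>t. (f t)\<^sup>2) = integral {0..2 * pi} (\<lambda>t. (f' t)\<^sup>2)"
    and t0: "0 \<le> t0" "t0 \<le> pi" "f t0 = f (t0 + pi)"
  shows "f t0 = 0"
    and "integral {t0..t0 + pi} (\<lambda>t. (f' t)\<^sup>2 - (f t)\<^sup>2) = 0"
    and "integral {t0 + pi..t0 + pi + pi} (\<lambda>t. (f' t)\<^sup>2 - (f t)\<^sup>2) = 0"
proof -
  have cont_f: "continuous_on UNIV f"
    using deriv by (meson DERIV_isCont continuous_at_imp_continuous_on)
  define c where "c = f t0"
  define g where "g t = f t - c" for t
  define F where "F t = (f' t)\<^sup>2 - (g t)\<^sup>2" for t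
  have deriv_g: "(g has_real_derivative f' x) (at x)" for x
    unfolding g_def using deriv[of x] by (auto intro!: derivative_eq_intros)
  have zeros: "g t0 = 0" "g (t0 + pi) = 0" "g (t0 + pi + pi) = 0"
    using t0 periodic[of t0] by (simp_all add: g_def c_def add.assoc)
  have cont_F: "continuous_on UNIV F"
    unfolding F_def g_def by (intro continuous_intros cont_f cont_deriv)
  have f'_periodic: "f' (x + 2 * pi) = f' x" for x
    by (rule periodic_derivative[OF deriv]) (rule periodic)
  have F_periodic: "F (x + 2 * pi) = F x" for x
    unfolding F_def g_def by (simp add: periodic f'_periodic)
  have "integral {t0..t0 + pi} F + integral {t0 + pi..t0 + pi + pi} F = integral {t0..t0 + 2 * pi} F"
    using Henstock_Kurzweil_Integration.integral_combine[of t0 "t0 + pi" "t0 + pi + pi" F]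
      integrable_continuous_interval[OF continuous_on_subset[OF cont_F]]
    by (simp add: add.assoc)
  also have "\<dots> = integral {0..2 * pi} F"
    using t0 by (intro integral_periodic_translate cont_F F_periodic) auto
  also have "\<dots> = - 2 * pi * c\<^sup>2"
    unfolding F_def g_def by (intro integral_wirtinger_defect_offset cont_f cont_deriv mean_zero wirtinger_eq)
  finally have total: "integral {t0..t0 + pi} F + integral {t0 + pi..t0 + pi + pi} F = - 2 * pi * c\<^sup>2" .
  have "0 \<le> integral {t0..t0 + pi} F" "0 \<le> integral {t0 + pi..t0 + pi + pi} F"
    unfolding F_def using zeros by (intro dirichlet_wirtinger_nonneg_interval deriv_g cont_deriv; simp)+
  moreover have "0 \<le> 2 * pi * c\<^sup>2"
    by simp
  ultimately have "2 * pi * c\<^sup>2 = 0" "integral {t0..t0 + pi} F = 0" "integral {t0 + pi..t0 + pi + pi} F = 0"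
    using total by linarith+
  then show "f t0 = 0"
    and "integral {t0..t0 + pi} (\<lambda>t. (f' t)\<^sup>2 - (f t)\<^sup>2) = 0"
    and "integral {t0 + pi..t0 + pi + pi} (\<lambda>t. (f' t)\<^sup>2 - (f t)\<^sup>2) = 0"
    unfolding F_def g_def c_def by simp_all
qed

lemma periodic_wirtinger_eq_imp_sinusoid:
  fixes f f' :: "real \<Rightarrow> real"
  assumes deriv: "\<And>x. (f has_real_derivative f' x) (at x)"
    and cont_deriv: "continuous_on UNIV f'"
    and periodic: "\<And>x. f (x + 2 * pi) = f x"
    and mean_zero: "integral {0..2 * pi} f = 0"
    and wirtinger_eq: "integral {0..2 * pi} (\<lambda>t. (f t)\<^sup>2) = integral {0..2 * pi} (\<lambda>t. (f' t)\<^sup>2)"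
  obtains A t0 where "\<And>t. f t = A * sin (t - t0)"
proof -
  have "continuous_on UNIV f"
    using deriv by (meson DERIV_isCont continuous_at_imp_continuous_on)
  then obtain t0 where t0: "0 \<le> t0" "t0 \<le> pi" "f t0 = f (t0 + pi)"
    using exists_eq_at_half_period_shift[of f pi] periodic by auto
  note halves = periodic_wirtinger_eq_half_periods[OF assms t0]
  have zeros: "f t0 = 0" "f (t0 + pi) = 0" "f (t0 + pi + pi) = 0"
    using halves(1) t0(3) periodic[of t0] by (simp_all add: add.assoc)
  obtain A1 A2 where A1: "\<forall>t\<in>{t0..t0 + pi}. f t = A1 * sin (t - t0)"
    and A2: "\<forall>t\<in>{t0 + pi..t0 + pi + pi}. f t = A2 * sin (t - (t0 + pi))"
    using dirichlet_wirtinger_eq_0_imp_sin_interval[OF deriv cont_deriv zeros(1,2) halves(2)]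
      dirichlet_wirtinger_eq_0_imp_sin_interval[OF deriv cont_deriv zeros(2,3) halves(3)]
    by blast
  have "f' (t0 + pi) = A1 * cos (t0 + pi - t0)"
    using A1
    by (intro continuous_derivatives_eq_on_interval[OF deriv, where a = t0 and b = "t0 + pi"]
        cont_deriv continuous_intros) (auto intro!: derivative_eq_intros)
  moreover have "f' (t0 + pi) = A2 * cos (t0 + pi - (t0 + pi))"
    using A2
    by (intro continuous_derivatives_eq_on_interval[OF deriv, where a = "t0 + pi" and b = "t0 + pi + pi"]
        cont_deriv continuous_intros) (auto intro!: derivative_eq_intros)
  ultimately have "A2 = - A1"
    by simp
  then have on_period: "f t = A1 * sin (t - t0)" if "t \<in> {t0..t0 + 2 * pi}" for t
    using A1 A2 that by (cases "t \<le> t0 + pi") (auto simp: sin_diff algebra_simps)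
  have "f t = A1 * sin (t - t0)" for t
    by (rule periodic_eq_if_eq_on_period[where f = f and T = "2 * pi", OF periodic _ _ on_period])
      (simp_all flip: diff_add_eq)
  then show thesis
    by (rule that)
qed

section \<open>Discrete orthogonality of sampled harmonics\<close>

lemma sum_cos_arith_progression_eq_0:
  fixes x \<phi> :: real
  assumes "real n * x = 2 * pi * of_int m" and "sin (x / 2) \<noteq> 0"
  shows "(\<Sum>i<n. cos (real i * x + \<phi>)) = 0"
proof -
  have step: "2 * sin (x / 2) * cos (real i * x + \<phi>) =
      sin (real (Suc i) * x - x / 2 + \<phi>) - sin (real i * x - x / 2 + \<phi>)" for i
  proof -
    have "sin (real (Suc i) * x - x / 2 + \<phi>) = sin ((real i * x + \<phi>) + x / 2)"
      "sin (real i * x - x / 2 + \<phi>) = sin ((real i * x + \<phi>) - x / 2)"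
      by (simp_all add: algebra_simps)
    then show ?thesis by (simp add: sin_add sin_diff)
  qed
  have "2 * sin (x / 2) * (\<Sum>i<n. cos (real i * x + \<phi>)) =
      (\<Sum>i<n. sin (real (Suc i) * x - x / 2 + \<phi>) - sin (real i * x - x / 2 + \<phi>))"
    by (simp add: sum_distrib_left step)
  also have "\<dots> = sin (real n * x - x / 2 + \<phi>) - sin (- x / 2 + \<phi>)"
    by (subst sum_lessThan_telescope) simp
  also have "\<dots> = 0"
    using sin.plus_of_int[of "- x / 2 + \<phi>" m] assms(1) by (simp add: algebra_simps)
  finally show ?thesis using assms(2) by simp
qed

lemma sum_sin_arith_progression_eq_0:
  fixes x \<phi> :: real
  assumes "real n * x = 2 * pi * of_int m" and "sin (x / 2) \<noteq> 0"
  shows "(\<Sum>i<n. sin (real i * x + \<phi>)) = 0"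
  using sum_cos_arith_progression_eq_0[OF assms, of "\<phi> - pi / 2"]
  by (simp add: add_diff_eq cos_diff)

lemma sin_pi_mul_frac_neq_0:
  fixes j :: int
  assumes "0 < \<bar>j\<bar>" "\<bar>j\<bar> < int n"
  shows "sin (pi * of_int j / real n) \<noteq> 0"
proof
  assume "sin (pi * of_int j / real n) = 0"
  then obtain i :: int where "pi * of_int j / real n = of_int i * pi"
    by (auto simp: sin_zero_iff_int2)
  with assms have "of_int j = (of_int (i * int n) :: real)"
    by (simp add: field_simps)
  then have j: "\<bar>j\<bar> = \<bar>i\<bar> * int n"
    by (simp only: of_int_eq_iff abs_mult)
  with assms have "1 \<le> \<bar>i\<bar>"
    by (cases "i = 0") auto
  then have "int n \<le> \<bar>i\<bar> * int n"
    by (simp add: mult_le_cancel_right1)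
  with j assms show False
    by simp
qed

lemma
  fixes j :: int and \<phi> :: real
  assumes "0 < \<bar>j\<bar>" "\<bar>j\<bar> < int n"
  shows sum_cos_harmonic_eq_0: "(\<Sum>i<n. cos (real i * (2 * pi / real n * of_int j) + \<phi>)) = 0"
    and sum_sin_harmonic_eq_0: "(\<Sum>i<n. sin (real i * (2 * pi / real n * of_int j) + \<phi>)) = 0"
proof -
  have "n > 0" using assms by simp
  then have "real n * (2 * pi / real n * of_int j) = 2 * pi * of_int j"
    by simp
  moreover have "sin (2 * pi / real n * of_int j / 2) \<noteq> 0"
    using sin_pi_mul_frac_neq_0[OF assms] by simp
  ultimately show "(\<Sum>i<n. cos (real i * (2 * pi / real n * of_int j) + \<phi>)) = 0"
    and "(\<Sum>i<n. sin (real i * (2 * pi / real n * of_int j) + \<phi>)) = 0"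
    by (rule sum_cos_arith_progression_eq_0 sum_sin_arith_progression_eq_0)+
qed

lemma
  fixes k n :: nat and \<phi> :: real
  assumes "2 \<le> k" "k + 1 < n"
  shows sum_sin_mul_cos_harmonic_eq_0:
      "(\<Sum>i<n. sin (2 * pi / real n * real i + \<phi>) * cos (2 * pi / real n * real i * real k)) = 0"
    and sum_sin_mul_sin_harmonic_eq_0:
      "(\<Sum>i<n. sin (2 * pi / real n * real i + \<phi>) * sin (2 * pi / real n * real i * real k)) = 0"
proof -
  define a where "a i = real i * (2 * pi / real n * of_int (int k + 1)) + \<phi>" for i
  define b where "b i = real i * (2 * pi / real n * of_int (1 - int k)) + \<phi>" for i
  have a: "(\<Sum>i<n. cos (a i)) = 0" "(\<Sum>i<n. sin (a i)) = 0"
    unfolding a_def using assms by (intro sum_cos_harmonic_eq_0 sum_sin_harmonic_eq_0; simp)+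
  have b: "(\<Sum>i<n. cos (b i)) = 0" "(\<Sum>i<n. sin (b i)) = 0"
    unfolding b_def using assms by (intro sum_cos_harmonic_eq_0 sum_sin_harmonic_eq_0; simp)+
  have sum_diff: "2 * pi / real n * real i + \<phi> + 2 * pi / real n * real i * real k = a i"
    "2 * pi / real n * real i + \<phi> - 2 * pi / real n * real i * real k = b i" for i
    unfolding a_def b_def by (simp_all add: algebra_simps add_divide_distrib diff_divide_distrib)
  have sin_cos: "sin (2 * pi / real n * real i + \<phi>) * cos (2 * pi / real n * real i * real k) =
      (sin (a i) + sin (b i)) / 2" for i
    by (simp flip: sum_diff add: sin_add sin_diff)
  show "(\<Sum>i<n. sin (2 * pi / real n * real i + \<phi>) * cos (2 * pi / real n * real i * real k)) = 0"
    unfolding sin_cos using a b by (simp add: sum.distrib flip: sum_divide_distrib)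
  have sin_sin: "sin (2 * pi / real n * real i + \<phi>) * sin (2 * pi / real n * real i * real k) =
      (cos (b i) - cos (a i)) / 2" for i
    by (simp flip: sum_diff add: cos_add cos_diff)
  show "(\<Sum>i<n. sin (2 * pi / real n * real i + \<phi>) * sin (2 * pi / real n * real i * real k)) = 0"
    unfolding sin_sin using a b by (simp add: sum_subtractf flip: sum_divide_distrib)
qed

lemma vinner_span2_eq_0:
  assumes "w \<in> span2 n u v" "vinner n x u = 0" "vinner n x v = 0"
  shows "vinner n x w = 0"
proof -
  from assms(1) obtain a b where w: "w = (\<lambda>i. if i < n then a * u i + b * v i else 0)"
    unfolding span2_def by blast
  have "vinner n x w = a * vinner n x u + b * vinner n x v"
    unfolding vinner_def w by (simp add: algebra_simps sum.distrib sum_distrib_left)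
  with assms show ?thesis by simp
qed

lemma orth_proj2_eq_0:
  assumes "vinner n x u = 0" "vinner n x v = 0"
  shows "orth_proj2 n u v x = (\<lambda>i. 0)"
  unfolding orth_proj2_def
proof (rule the_equality)
  have "(\<lambda>i. 0) \<in> span2 n u v"
    unfolding span2_def by (rule CollectI, rule exI[of _ 0], rule exI[of _ 0]) (simp add: fun_eq_iff)
  then show "(\<lambda>i. 0) \<in> span2 n u v \<and> (\<forall>w\<in>span2 n u v. vinner n (\<lambda>i. x i - 0) w = 0)"
    using vinner_span2_eq_0[OF _ assms] by simp
next
  fix p
  assume p: "p \<in> span2 n u v \<and> (\<forall>w\<in>span2 n u v. vinner n (\<lambda>i. x i - p i) w = 0)"
  then obtain a b where p_def: "p = (\<lambda>i. if i < n then a * u i + b * v i else 0)"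
    unfolding span2_def by blast
  have "vinner n p p = vinner n x p - vinner n (\<lambda>i. x i - p i) p"
    unfolding vinner_def by (simp add: sum_subtractf algebra_simps)
  also have "\<dots> = 0"
    using p vinner_span2_eq_0[OF _ assms] by simp
  finally have "\<forall>i\<in>{..<n}. p i * p i = 0"
    unfolding vinner_def by (subst sum_nonneg_eq_0_iff[symmetric]) auto
  then show "p = (\<lambda>i. 0)"
    using p_def by (auto simp: fun_eq_iff)
qed

lemma
  fixes f :: "real \<Rightarrow> real"
  assumes f: "\<And>t. f t = A * sin (t - t0)" and k: "2 \<le> k" "k + 1 < n"
  shows vinner_sinusoid_sample_ecos: "vinner n (sampleX f n) (ecos n k) = 0"
    and vinner_sinusoid_sample_esin: "vinner n (sampleX f n) (esin n k) = 0"
proof -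
  (* sampleX stores f (2 pi (i + 1) / n) at index i, hence the phase 2 pi / n - t0 *)
  have sample: "sampleX f n i = A * sin (2 * pi / real n * real i + (2 * pi / real n - t0))" for i
    unfolding sampleX_def f by (simp add: algebra_simps add_divide_distrib)
  show "vinner n (sampleX f n) (ecos n k) = 0"
    unfolding vinner_def ecos_def sample
    using sum_sin_mul_cos_harmonic_eq_0[OF k, of "2 * pi / real n - t0"]
    by (simp add: ac_simps flip: sum_distrib_left)
  show "vinner n (sampleX f n) (esin n k) = 0"
    unfolding vinner_def esin_def sample
    using sum_sin_mul_sin_harmonic_eq_0[OF k, of "2 * pi / real n - t0"]
    by (simp add: ac_simps flip: sum_distrib_left)
qed

theorem lemma3p2:
  fixes f f' :: "real \<Rightarrow> real"
  assumes deriv: "\<And>x. (f has_real_derivative f' x) (at x)"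
    and cont_deriv: "continuous_on UNIV f'"
    and periodic: "\<And>x. f (x + 2 * pi) = f x"
    and mean_zero: "integral {0..2 * pi} f = 0"
    and wirtinger_eq: "integral {0..2 * pi} (\<lambda>t. (f t)\<^sup>2) = integral {0..2 * pi} (\<lambda>t. (f' t)\<^sup>2)"
  shows "(\<lambda>m. let n = 2 * m + 5 in
            (1 / real n) * (\<Sum>k = 2..(n - 1) div 2.
               (vnorm n (orth_proj2 n (ecos n k) (esin n k) (sampleX f n)))\<^sup>2))
         \<longlonglongrightarrow> 0"
proof -
  obtain A t0 where f: "\<And>t. f t = A * sin (t - t0)"
    using periodic_wirtinger_eq_imp_sinusoid[OF assms] by blast
  have "(vnorm n (orth_proj2 n (ecos n k) (esin n k) (sampleX f n)))\<^sup>2 = 0"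
    if "k \<in> {2..(n - 1) div 2}" for n k
  proof -
    from that have k: "2 \<le> k" "k + 1 < n"
      by auto
    show ?thesis
      using orth_proj2_eq_0[OF vinner_sinusoid_sample_ecos[OF f k] vinner_sinusoid_sample_esin[OF f k]]
      by (simp add: vnorm_def vinner_def)
  qed
  then show ?thesis
    by (simp add: Let_def)
qed

end
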